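(* Let $z_0\in\mathbb{C}$, $\mathcal{B}$ a neighborhood of $z_0$, $a\in\mathbb{C}$, and let $p,q$ be holomorphic on a domain containing $\mathcal{B}$, $p$ not constant, with $p(z)=p(z_0)-p_0(z-z_0)^\mu(1-\phi(z))$ on $\mathcal{B}$, $\mu\in\mathbb{Z}_{\ge1}$, $p_0\ne0$, $\phi$ holomorphic on $\mathcal{B}$, $\phi(z_0)=0$. Let $$\alpha_s=\frac{1}{\mu\,s!}p_0^{-(s+a)/\mu}\frac{d^s}{dz^s}\Big\{q(z)(1-\phi(z))^{-(s+a)/\mu}\Big\}_{z=z_0}.$$ Let $K_q^*$ be a bound for $|q(z)|$ on $\mathcal{B}$. Then $$\alpha_s=O\big(K_q^*\cdot C^s\big)\quad\text{for } s\in\mathbb{Z}_{\ge0},$$ where the positive constant $C$ and the implied constant are both independent of $q$ and $s$.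
   Context: Powers are principal values: $u^\tau=e^{\tau\log u}$ with $\log$ having arguments in $(-\pi,\pi]$. *)

theory Defs
  imports "HOL-Complex_Analysis.Complex_Analysis"
begin

text \<open>The coefficient alpha_s of the paper:
  alpha_s = 1/(mu s!) * p0^{-(s+a)/mu} * d^s/dz^s { q(z) (1 - phi(z))^{-(s+a)/mu} } at z = z0,
  with principal-value powers (Isabelle's complex powr uses Ln with arg in (-pi,pi]).\<close>
definition alpha_coeff ::
  "complex \<Rightarrow> complex \<Rightarrow> nat \<Rightarrow> complex \<Rightarrow> (complex \<Rightarrow> complex) \<Rightarrow> (complex \<Rightarrow> complex) \<Rightarrow> nat \<Rightarrow> complex"
  where
  "alpha_coeff z0 a \<mu> p0 \<phi> q s =
     (1 / (of_nat \<mu> * of_nat (fact s))) *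
     p0 powr (- (of_nat s + a) / of_nat \<mu>) *
     (deriv ^^ s) (\<lambda>z. q z * (1 - \<phi> z) powr (- (of_nat s + a) / of_nat \<mu>)) z0"

end

theory Submission
  imports Defs
begin

text \<open>Choose a closed disc around \<open>z0\<close> inside \<open>\<B>\<close> on which \<open>Re (1 - \<phi>) > 0\<close>, so that the
  principal power \<open>(1 - \<phi>)\<^sup>w\<close> is holomorphic there. With \<open>L\<close> a bound for \<open>|Ln (1 - \<phi>)|\<close> on the
  disc, \<open>|u\<^sup>w| \<le> exp (|w| |Ln u|)\<close> and \<open>|w| = |s + a| / \<mu> \<le> s + |a|\<close> bound the integrand of the
  Cauchy estimate by \<open>K exp ((s + |a|) L)\<close>; the same applies to \<open>p0\<^sup>w\<close>. The Cauchy
  inequality on the disc of radius \<open>r\<close> cancels the \<open>s!\<close>, leaving geometric growth with ratio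
  \<open>C = exp (L + |Ln p0|) / r\<close>, which depends only on \<open>\<phi>\<close>, \<open>p0\<close> and the disc.\<close>

lemma norm_powr_le_exp_norm_Ln:
  fixes u w :: complex
  shows "norm (u powr w) \<le> exp (norm w * norm (Ln u))"
proof (cases "u = 0")
  case False
  have "norm (u powr w) = exp (Re (w * Ln u))"
    using False by (simp add: powr_def norm_exp_eq_Re)
  also have "\<dots> \<le> exp (norm (w * Ln u))"
    by (simp only: exp_le_cancel_iff complex_Re_le_cmod)
  finally show ?thesis by (simp add: norm_mult)
qed simp

lemma norm_alpha_exponent_le:
  fixes a :: complex and s \<mu> :: nat
  assumes "\<mu> \<ge> 1"
  shows "norm (- (of_nat s + a) / of_nat \<mu>) \<le> real s + norm a"
proof -
  have "norm (- (of_nat s + a) / of_nat \<mu> :: complex) = norm (of_nat s + a :: complex) / real \<mu>"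
    by (simp only: norm_divide norm_minus_cancel norm_of_nat)
  also have "\<dots> \<le> norm (of_nat s + a :: complex)"
    using assms by (simp add: divide_le_eq mult_le_cancel_left1)
  also have "\<dots> \<le> real s + norm a"
    using norm_triangle_ineq[of "of_nat s :: complex" a] by simp
  finally show ?thesis .
qed

lemma ball_where_Re_one_minus_pos:
  fixes \<phi> :: "complex \<Rightarrow> complex"
  assumes "open B" "z0 \<in> B" "continuous_on B \<phi>" "\<phi> z0 = 0"
  obtains e where "e > 0" "ball z0 e \<subseteq> B" "\<forall>z\<in>ball z0 e. Re (1 - \<phi> z) > 0"
proof -
  obtain e1 where e1: "e1 > 0" "ball z0 e1 \<subseteq> B"
    using assms(1,2) openE by blast
  obtain d where d: "d > 0" "\<forall>z\<in>B. dist z z0 < d \<longrightarrow> dist (\<phi> z) (\<phi> z0) < 1"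
    using assms(2,3) unfolding continuous_on_iff by (meson zero_less_one)
  have "Re (1 - \<phi> z) > 0" if "z \<in> ball z0 (min d e1)" for z
  proof -
    have "norm (\<phi> z) < 1"
      using d e1 that assms(4) by (auto simp: dist_commute)
    then show ?thesis
      using complex_Re_le_cmod[of "\<phi> z"] by simp
  qed
  with d e1 show ?thesis
    by (intro that[of "min d e1"]) auto
qed

lemma bounded_norm_Ln_on_compact:
  fixes g :: "complex \<Rightarrow> complex"
  assumes "compact K" "continuous_on K g" "\<forall>z\<in>K. g z \<notin> \<real>\<^sub>\<le>\<^sub>0"
  obtains L where "L \<ge> 0" "\<forall>z\<in>K. norm (Ln (g z)) \<le> L"
proof -
  have "continuous_on K (\<lambda>z. Ln (g z))"
    using assms(2,3) by (intro continuous_intros) auto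
  then have "bounded ((\<lambda>z. Ln (g z)) ` K)"
    using assms(1) by (intro compact_imp_bounded compact_continuous_image)
  then obtain L where "\<forall>z\<in>K. norm (Ln (g z)) \<le> L"
    unfolding bounded_iff by blast
  then show ?thesis
    by (intro that[of "max L 0"]) force+
qed

lemma norm_alpha_coeff_le:
  fixes z0 a p0 :: complex and S :: "complex set" and q \<phi> :: "complex \<Rightarrow> complex"
  assumes "\<mu> \<ge> 1" and "open S" and "cball z0 r \<subseteq> S" and "r > 0"
    and "q holomorphic_on S" and "\<phi> holomorphic_on S" and "\<forall>z\<in>S. Re (1 - \<phi> z) > 0"
    and qK: "\<forall>z\<in>cball z0 r. norm (q z) \<le> K"
    and Ln_le: "\<forall>z\<in>cball z0 r. norm (Ln (1 - \<phi> z)) \<le> L" and "L \<ge> 0"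
  shows "norm (alpha_coeff z0 a \<mu> p0 \<phi> q s)
           \<le> exp (norm a * (L + norm (Ln p0))) * K * (exp (L + norm (Ln p0)) / r) ^ s"
proof -
  define w :: complex where "w = - (of_nat s + a) / of_nat \<mu>"
  define f where "f = (\<lambda>z. q z * (1 - \<phi> z) powr w)"
  have w_le: "norm w \<le> real s + norm a"
    unfolding w_def using norm_alpha_exponent_le assms(1) by blast
  have "norm (q z0) \<le> K"
    using qK assms(4) by simp
  then have "K \<ge> 0"
    by (meson norm_ge_zero order_trans)
  have "f holomorphic_on S"
    unfolding f_def using assms(5-7)
    by (intro holomorphic_intros) (auto simp: complex_nonpos_Reals_iff)
  then have "f holomorphic_on ball z0 r" "continuous_on (cball z0 r) f"
    using assms(3) ball_subset_cball
    by (meson holomorphic_on_subset subset_trans, meson holomorphic_on_imp_continuous_on holomorphic_on_subset)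
  moreover have "norm (f z) \<le> K * exp ((real s + norm a) * L)" if "z \<in> cball z0 r" for z
  proof -
    have "norm (f z) \<le> K * exp (norm w * norm (Ln (1 - \<phi> z)))"
      unfolding f_def norm_mult
      using qK that norm_powr_le_exp_norm_Ln \<open>K \<ge> 0\<close> by (intro mult_mono) auto
    also have "\<dots> \<le> K * exp ((real s + norm a) * L)"
      using \<open>K \<ge> 0\<close> w_le Ln_le that \<open>L \<ge> 0\<close> by (intro mult_left_mono) (auto intro!: mult_mono)
    finally show ?thesis .
  qed
  ultimately have f_deriv_le: "norm ((deriv ^^ s) f z0) \<le> fact s * (K * exp ((real s + norm a) * L)) / r ^ s"
    using assms(4) by (intro Cauchy_inequality) (auto simp: dist_norm)
  have p0_le: "norm (p0 powr w) \<le> exp ((real s + norm a) * norm (Ln p0))"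
    using norm_powr_le_exp_norm_Ln[of p0 w] w_le
    by (smt (verit) exp_mono mult_right_mono norm_ge_zero)
  have "norm (alpha_coeff z0 a \<mu> p0 \<phi> q s)
          = 1 / (real \<mu> * fact s) * norm (p0 powr w) * norm ((deriv ^^ s) f z0)"
    unfolding alpha_coeff_def f_def w_def by (simp add: norm_mult norm_divide)
  also have "\<dots> \<le> 1 / fact s * exp ((real s + norm a) * norm (Ln p0))
                   * (fact s * (K * exp ((real s + norm a) * L)) / r ^ s)"
    using assms(1) p0_le f_deriv_le by (intro mult_mono) (auto simp: field_simps)
  also have "\<dots> = K * exp (norm a * (L + norm (Ln p0))) * exp (real s * (L + norm (Ln p0))) / r ^ s"
    by (simp add: field_simps exp_add[symmetric])
  also have "\<dots> = exp (norm a * (L + norm (Ln p0))) * K * (exp (L + norm (Ln p0)) / r) ^ s"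
    by (simp add: exp_of_nat_mult power_divide)
  finally show ?thesis .
qed

theorem proposition7p3:
  fixes z0 a p0 :: complex and B D :: "complex set" and p \<phi> :: "complex \<Rightarrow> complex" and \<mu> :: nat
  assumes "open B" and "z0 \<in> B"
    and "open D" and "connected D" and "B \<subseteq> D"
    and "p holomorphic_on D"
    and "\<not> (\<exists>c. \<forall>z\<in>D. p z = c)"
    and "\<mu> \<ge> 1" and "p0 \<noteq> 0"
    and "\<phi> holomorphic_on B" and "\<phi> z0 = 0"
    and "\<forall>z\<in>B. p z = p z0 - p0 * (z - z0) ^ \<mu> * (1 - \<phi> z)"
  shows "\<exists>C>0. \<exists>M. \<forall>q K s. q holomorphic_on D \<longrightarrow> (\<forall>z\<in>B. norm (q z) \<le> K) \<longrightarrow>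
           norm (alpha_coeff z0 a \<mu> p0 \<phi> q s) \<le> M * K * C ^ s"
proof -
  obtain e where e: "e > 0" "ball z0 e \<subseteq> B" and Re_pos: "\<forall>z\<in>ball z0 e. Re (1 - \<phi> z) > 0"
    using ball_where_Re_one_minus_pos assms(1,2,10,11) holomorphic_on_imp_continuous_on by blast
  define r where "r = e / 2"
  have r: "r > 0" "cball z0 r \<subseteq> ball z0 e"
    using e unfolding r_def by auto
  have \<phi>_hol: "\<phi> holomorphic_on ball z0 e"
    using assms(10) e(2) holomorphic_on_subset by blast
  have "continuous_on (cball z0 r) (\<lambda>z. 1 - \<phi> z)"
    using r \<phi>_hol
    by (intro continuous_intros holomorphic_on_imp_continuous_on) (meson holomorphic_on_subset ball_subset_cball subset_trans)
  moreover have "\<forall>z\<in>cball z0 r. 1 - \<phi> z \<notin> \<real>\<^sub>\<le>\<^sub>0"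
    using r(2) Re_pos by (force simp: complex_nonpos_Reals_iff)
  ultimately obtain L where L: "L \<ge> 0" "\<forall>z\<in>cball z0 r. norm (Ln (1 - \<phi> z)) \<le> L"
    using bounded_norm_Ln_on_compact[OF compact_cball] by blast
  have "norm (alpha_coeff z0 a \<mu> p0 \<phi> q s)
          \<le> exp (norm a * (L + norm (Ln p0))) * K * (exp (L + norm (Ln p0)) / r) ^ s"
    if "q holomorphic_on D" and "\<forall>z\<in>B. norm (q z) \<le> K" for q K s
  proof -
    have "q holomorphic_on ball z0 e"
      using that(1) e(2) assms(5) by (meson holomorphic_on_subset subset_trans)
    moreover have "\<forall>z\<in>cball z0 r. norm (q z) \<le> K"
      using that(2) r(2) e(2) by blast
    ultimately show ?thesis
      using norm_alpha_coeff_le[OF assms(8) open_ball r(2) r(1) _ \<phi>_hol Re_pos _ L(2) L(1)] by blast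
  qed
  moreover have "exp (L + norm (Ln p0)) / r > 0"
    using r by simp
  ultimately show ?thesis by blast
qed

end
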